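(* For every $p\in\mathbb Z$ and every $\tau\in\{0,\dots,\beta(|p|)-1\}$, $$\|D_{p,\tau}\|_{L^2(I_{p,\tau})}=\Big(\int_{I_{p,\tau}}|D_{p,\tau}(t)|^2\,dt\Big)^{1/2}>0.85,$$ where $I_{p,\tau}=\Big[\frac{\tau}{\beta(|p|)}-\frac{1}{2\beta(|p|)},\ \frac{\tau}{\beta(|p|)}+\frac{1}{2\beta(|p|)}\Big]$, understood as an interval on the circle $\mathbb R/\mathbb Z$ (in particular $I_{p,0}=[0,\frac{1}{2\beta(|p|)})\cup(1-\frac{1}{2\beta(|p|)},1]$). Since $\|D_{p,\tau}\|_{L^2([0,1])}=1$, the part of the $L^2$-norm of $D_{p,\tau}$ outside $I_{p,\tau}$ is correspondingly small.
   Context: The functions $D_{p,\tau}$ are 1-periodic. Define $\nu,\beta$ on $\mathbb N$ by $\nu(0)=0,\ \beta(0)=1$; $\nu(1)=1,\ \beta(1)=1$; for $p\ge 2$, $\nu(p)=2^{p-1}+2^{p-2}$, $\beta(p)=2^{p-1}$; set $\nu(-p)=-\nu(p)$, $\beta(-p)=\beta(p)$. The DOST functions are: $D_{0,0}(t)=1$; $D_{1,0}(t)=e^{2\pi i t}$; for $p\ge 2$, $\tau=0,\dots,\beta(p)-1$, $D_{p,\tau}(t)=\beta(p)^{-1/2}\sum_{j=0}^{\beta(p)-1}e^{2\pi i(\beta(p)+j)(t-\tau/\beta(p))}$; and for $p<0$, $D_{p,\tau}=\overline{D_{-p,\tau}}$. *)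

theory Defs
  imports "HOL-Analysis.Analysis"
begin

fun dost_beta :: "nat \<Rightarrow> nat" where
  "dost_beta 0 = 1"
| "dost_beta (Suc 0) = 1"
| "dost_beta p = 2 ^ (p - 1)"

fun dost_nu_nat :: "nat \<Rightarrow> nat" where
  "dost_nu_nat 0 = 0"
| "dost_nu_nat (Suc 0) = 1"
| "dost_nu_nat p = 2 ^ (p - 1) + 2 ^ (p - 2)"

definition dost_nu :: "int \<Rightarrow> int" where
  "dost_nu p = (if p \<ge> 0 then int (dost_nu_nat (nat p)) else - int (dost_nu_nat (nat (- p))))"

definition beta_int :: "int \<Rightarrow> nat" where
  "beta_int p = dost_beta (nat \<bar>p\<bar>)"

fun dost_pos :: "nat \<Rightarrow> nat \<Rightarrow> real \<Rightarrow> complex" where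
  "dost_pos 0 \<tau> t = 1"
| "dost_pos (Suc 0) \<tau> t = exp (2 * pi * \<i> * complex_of_real t)"
| "dost_pos p \<tau> t =
     (let b = dost_beta p in
      complex_of_real (1 / sqrt (real b)) *
        (\<Sum>j<b. exp (2 * pi * \<i> * of_nat (b + j) *
                     complex_of_real (t - real \<tau> / real b))))"

definition DOST :: "int \<Rightarrow> nat \<Rightarrow> real \<Rightarrow> complex" where
  "DOST p \<tau> t = (if p \<ge> 0 then dost_pos (nat p) \<tau> t else cnj (dost_pos (nat (- p)) \<tau> t))"

end

theory Submission imports Defs "HOL-Analysis.Analysis" begin

text \<open>Write b = \<beta>(|p|) and s = t - \<tau>/b. For |p| \<ge> 2, sqrt b * D(t) is the block
  of b consecutive exponentials exp(2\<pi>i(b+j)s), j < b. Rotating it by the phase of the middle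
  frequency, its modulus is at least the sum of cos(2\<pi>(j - (b-1)/2)s) \<ge> b - \<pi>^2s^2b(b^2-1)/6,
  whence |D(t)|^2 \<ge> b - \<pi>^2b^3s^2/3. This parabola integrates over |s| \<le> 1/(2b) to
  1 - \<pi>^2/36, which exceeds 0.85^2.\<close>

lemma cos_ge_one_minus_square_half: "1 - x\<^sup>2 / 2 \<le> cos (x::real)"
proof -
  have "cos x = 1 - 2 * (sin (x/2))\<^sup>2" using cos_double_sin[of "x/2"] by simp
  moreover have "(sin (x/2))\<^sup>2 \<le> (x/2)\<^sup>2"
    using abs_sin_x_le_abs_x[of "x/2"] by (metis abs_ge_zero power2_abs power_mono)
  ultimately show ?thesis by (simp add: power_divide)
qed

lemma sum_lessThan_real: "(\<Sum>j<b. real j) = real b * (real b - 1) / 2"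
  by (induction b) (auto simp: field_simps)

lemma sum_lessThan_real_squared: "(\<Sum>j<b. (real j)\<^sup>2) = real b * (real b - 1) * (2 * real b - 1) / 6"
  by (induction b) (auto simp: field_simps power2_eq_square)

lemma sum_lessThan_centered_squares:
  "(\<Sum>j<b. (real j - (real b - 1) / 2)\<^sup>2) = real b * ((real b)\<^sup>2 - 1) / 12"
proof -
  define m where "m = (real b - 1) / 2"
  have "(\<Sum>j<b. (real j - m)\<^sup>2) = (\<Sum>j<b. (real j)\<^sup>2 - 2 * m * real j + m\<^sup>2)"
    by (rule sum.cong) (auto simp: power2_diff algebra_simps)
  also have "\<dots> = (\<Sum>j<b. (real j)\<^sup>2) - 2 * m * (\<Sum>j<b. real j) + real b * m\<^sup>2"
    by (simp add: sum.distrib sum_subtractf sum_distrib_left)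
  also have "\<dots> = real b * ((real b)\<^sup>2 - 1) / 12"
    unfolding sum_lessThan_real sum_lessThan_real_squared m_def
    by (simp add: field_simps power2_eq_square)
  finally show ?thesis unfolding m_def .
qed

lemma sum_cos_le_norm_sum_exp:
  "(\<Sum>j\<in>A. cos (\<theta> j - \<phi>)) \<le> cmod (\<Sum>j\<in>A. exp (\<i> * complex_of_real (\<theta> j)))"
proof -
  let ?S = "\<Sum>j\<in>A. exp (\<i> * complex_of_real (\<theta> j))"
  let ?w = "exp (- \<i> * complex_of_real \<phi>)"
  have "?w * ?S = (\<Sum>j\<in>A. exp (\<i> * complex_of_real (\<theta> j - \<phi>)))"
    unfolding sum_distrib_left by (rule sum.cong) (auto simp: exp_add[symmetric] algebra_simps)
  then have "(\<Sum>j\<in>A. cos (\<theta> j - \<phi>)) = Re (?w * ?S)"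
    by (simp add: Re_exp)
  also have "\<dots> \<le> cmod (?w * ?S)" by (rule complex_Re_le_cmod)
  also have "\<dots> = cmod ?S" by (simp add: norm_mult norm_exp_eq_Re)
  finally show ?thesis .
qed

lemma norm_sum_exp_block_ge:
  fixes a b :: nat and s :: real
  shows "real b - pi\<^sup>2 * s\<^sup>2 * real b * ((real b)\<^sup>2 - 1) / 6
         \<le> cmod (\<Sum>j<b. exp (2 * pi * \<i> * of_nat (a + j) * complex_of_real s))"
proof -
  define c where "c j = real j - (real b - 1) / 2" for j
  define \<theta> where "\<theta> j = 2 * pi * real (a + j) * s" for j
  have "(\<Sum>j<b. 1 - (2 * pi * c j * s)\<^sup>2 / 2) = real b - 2 * pi\<^sup>2 * s\<^sup>2 * (\<Sum>j<b. (c j)\<^sup>2)"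
    by (simp add: sum_subtractf sum_distrib_left power_mult_distrib mult_ac)
  then have "real b - pi\<^sup>2 * s\<^sup>2 * real b * ((real b)\<^sup>2 - 1) / 6
        = (\<Sum>j<b. 1 - (2 * pi * c j * s)\<^sup>2 / 2)"
    unfolding c_def sum_lessThan_centered_squares by simp
  also have "\<dots> \<le> (\<Sum>j<b. cos (\<theta> j - 2 * pi * (real a + (real b - 1) / 2) * s))"
  proof (rule sum_mono)
    fix j
    have "\<theta> j - 2 * pi * (real a + (real b - 1) / 2) * s = 2 * pi * c j * s"
      by (simp add: \<theta>_def c_def algebra_simps)
    then show "1 - (2 * pi * c j * s)\<^sup>2 / 2 \<le> cos (\<theta> j - 2 * pi * (real a + (real b - 1) / 2) * s)"
      using cos_ge_one_minus_square_half by simp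
  qed
  also have "\<dots> \<le> cmod (\<Sum>j<b. exp (\<i> * complex_of_real (\<theta> j)))"
    by (rule sum_cos_le_norm_sum_exp)
  also have "(\<Sum>j<b. exp (\<i> * complex_of_real (\<theta> j)))
             = (\<Sum>j<b. exp (2 * pi * \<i> * of_nat (a + j) * complex_of_real s))"
    by (simp add: \<theta>_def mult_ac)
  finally show ?thesis .
qed

lemma norm_sum_exp_block_squared_ge:
  fixes a b :: nat and s :: real
  shows "(real b)\<^sup>2 - pi\<^sup>2 * s\<^sup>2 * (real b)^4 / 3
         \<le> (cmod (\<Sum>j<b. exp (2 * pi * \<i> * of_nat (a + j) * complex_of_real s)))\<^sup>2"
proof -
  define M where "M = cmod (\<Sum>j<b. exp (2 * pi * \<i> * of_nat (a + j) * complex_of_real s))"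
  define L where "L = real b - pi\<^sup>2 * s\<^sup>2 * real b * ((real b)\<^sup>2 - 1) / 6"
  have "L \<le> M" unfolding L_def M_def by (rule norm_sum_exp_block_ge)
  \<comment> \<open>\<open>L\<close> may be negative, so instead of squaring we use \<open>(M - b)\<^sup>2 \<ge> 0\<close>.\<close>
  have "(real b)\<^sup>2 - pi\<^sup>2 * s\<^sup>2 * (real b)^4 / 3 \<le> 2 * real b * L - (real b)\<^sup>2"
    using zero_le_power2[of "pi * s * real b"]
    unfolding L_def by (simp add: power2_eq_square power4_eq_xxxx field_simps)
  also have "\<dots> \<le> 2 * real b * M - (real b)\<^sup>2"
    using \<open>L \<le> M\<close> by (simp add: mult_left_mono)
  also have "\<dots> \<le> M\<^sup>2"
    using zero_le_power2[of "M - real b"] by (simp add: power2_diff mult_ac)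
  finally show ?thesis unfolding M_def .
qed

lemma dost_beta_pos: "dost_beta n > 0"
  by (induction n rule: dost_beta.induct) auto

lemma dost_pos_eq_block:
  assumes "n \<ge> 2"
  shows "dost_pos n \<tau> t = complex_of_real (1 / sqrt (real (dost_beta n))) *
        (\<Sum>j<dost_beta n. exp (2 * pi * \<i> * of_nat (dost_beta n + j) *
                     complex_of_real (t - real \<tau> / real (dost_beta n))))"
proof -
  obtain m where "n = Suc (Suc m)" using assms by (metis add_2_eq_Suc le_Suc_ex)
  then show ?thesis by (simp add: Let_def)
qed

lemma continuous_on_dost_pos: "continuous_on UNIV (dost_pos n \<tau>)"
proof (cases "n \<ge> 2")
  case True
  show ?thesis
    by (subst dost_pos_eq_block[OF True, abs_def]) (intro continuous_intros)
next
  case False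
  then have "n = 0 \<or> n = 1" by auto
  then show ?thesis by (auto intro!: continuous_intros)
qed

lemma norm_DOST: "cmod (DOST p \<tau> t) = cmod (dost_pos (nat \<bar>p\<bar>) \<tau> t)"
  unfolding DOST_def by auto

lemma norm_DOST_squared_ge:
  "real (beta_int p) - pi\<^sup>2 * real (beta_int p)^3 * (t - real \<tau> / real (beta_int p))\<^sup>2 / 3
   \<le> (cmod (DOST p \<tau> t))\<^sup>2"
proof -
  define n where "n = nat \<bar>p\<bar>"
  define b where "b = dost_beta n"
  define s where "s = t - real \<tau> / real b"
  have beta: "beta_int p = b" unfolding b_def n_def beta_int_def ..
  have b_pos: "real b > 0" unfolding b_def using dost_beta_pos by simp
  show ?thesis
  proof (cases "n \<ge> 2")
    case False
    then have "n = 0 \<or> n = 1" by auto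
    then have "b = 1" "cmod (DOST p \<tau> t) = 1" unfolding b_def norm_DOST n_def[symmetric] by auto
    then show ?thesis unfolding beta by simp
  next
    case True
    define S where "S = (\<Sum>j<b. exp (2 * pi * \<i> * of_nat (b + j) * complex_of_real s))"
    have "cmod (DOST p \<tau> t) = cmod (complex_of_real (1 / sqrt (real b)) * S)"
      unfolding norm_DOST n_def[symmetric] S_def s_def b_def using dost_pos_eq_block[OF True] by simp
    also have "\<dots> = cmod S / sqrt (real b)"
      using b_pos by (simp add: norm_divide)
    finally have "(cmod (DOST p \<tau> t))\<^sup>2 = (cmod S)\<^sup>2 / real b"
      using b_pos by (simp add: power_divide)
    also have "\<dots> \<ge> ((real b)\<^sup>2 - pi\<^sup>2 * s\<^sup>2 * (real b)^4 / 3) / real b"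
      using norm_sum_exp_block_squared_ge[where a = b and b = b and s = s] b_pos unfolding S_def by (simp add: divide_right_mono)
    moreover have "((real b)\<^sup>2 - pi\<^sup>2 * s\<^sup>2 * (real b)^4 / 3) / real b = real b - pi\<^sup>2 * real b^3 * s\<^sup>2 / 3"
      using b_pos by (simp add: field_simps power2_eq_square power3_eq_cube power4_eq_xxxx)
    ultimately show ?thesis unfolding beta s_def by simp
  qed
qed

lemma has_integral_parabola_centered:
  fixes b c :: real
  assumes "b > 0"
  shows "((\<lambda>t. b - pi\<^sup>2 * b^3 * (t - c)\<^sup>2 / 3) has_integral (1 - pi\<^sup>2 / 36)) {c - 1/(2*b) .. c + 1/(2*b)}"
proof -
  define G where "G t = b * t - pi\<^sup>2 * b^3 * (t - c)^3 / 9" for t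
  have "((\<lambda>t. b - pi\<^sup>2 * b^3 * (t - c)\<^sup>2 / 3) has_integral (G (c + 1/(2*b)) - G (c - 1/(2*b))))
          {c - 1/(2*b) .. c + 1/(2*b)}"
  proof (rule fundamental_theorem_of_calculus)
    show "c - 1/(2*b) \<le> c + 1/(2*b)" using assms by simp
    fix x
    show "(G has_vector_derivative (b - pi\<^sup>2 * b^3 * (x - c)\<^sup>2 / 3)) (at x within {c - 1/(2*b) .. c + 1/(2*b)})"
      unfolding G_def has_real_derivative_iff_has_vector_derivative[symmetric]
      by (rule derivative_eq_intros refl | simp add: power2_eq_square field_simps)+
  qed
  moreover have "G (c + 1/(2*b)) - G (c - 1/(2*b)) = 1 - pi\<^sup>2 / 36"
    unfolding G_def using assms by (simp add: power3_eq_cube field_simps)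
  ultimately show ?thesis by simp
qed

lemma one_minus_pi_squared_div_36_gt: "(85/100)\<^sup>2 < 1 - pi\<^sup>2 / 36"
proof -
  have "pi\<^sup>2 \<le> 3.1415926535899\<^sup>2"
    using pi_approx(2) pi_gt_zero by (intro power_mono) auto
  then show ?thesis by (simp add: power2_eq_square)
qed

theorem proposition3p4:
  fixes p :: int and \<tau> :: nat
  assumes "\<tau> < beta_int p"
  shows "sqrt (integral {real \<tau> / real (beta_int p) - 1 / (2 * real (beta_int p)) ..
                        real \<tau> / real (beta_int p) + 1 / (2 * real (beta_int p))}
                (\<lambda>t. (cmod (DOST p \<tau> t))\<^sup>2)) > 85 / 100"
proof -
  \<comment> \<open>The pointwise bound holds for every \<tau>.\<close>
  define b where "b = real (beta_int p)"
  define c where "c = real \<tau> / b"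
  define I where "I = {c - 1/(2*b) .. c + 1/(2*b)}"
  have b_pos: "b > 0" unfolding b_def beta_int_def using dost_beta_pos by simp
  have "continuous_on I (\<lambda>t. (cmod (DOST p \<tau> t))\<^sup>2)"
    unfolding norm_DOST by (intro continuous_intros continuous_on_compose2[OF continuous_on_dost_pos]) auto
  then have "(\<lambda>t. (cmod (DOST p \<tau> t))\<^sup>2) integrable_on I"
    unfolding I_def by (rule integrable_continuous_interval)
  then have "1 - pi\<^sup>2 / 36 \<le> integral I (\<lambda>t. (cmod (DOST p \<tau> t))\<^sup>2)"
    using norm_DOST_squared_ge unfolding I_def b_def c_def
    by (intro has_integral_le[OF has_integral_parabola_centered[OF b_pos[unfolded b_def]] integrable_integral])
      auto
  then have "(85/100)\<^sup>2 < integral I (\<lambda>t. (cmod (DOST p \<tau> t))\<^sup>2)"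
    using one_minus_pi_squared_div_36_gt by linarith
  then show ?thesis unfolding I_def b_def c_def by (intro real_less_rsqrt)
qed

end
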